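(* Let $n>1$ be an odd integer. If a $(K_2,K_{1,n})$-$URD(v;1,s)$ exists, then $v \equiv 2(n+1) \pmod{n(n+1)}$ and, writing $v=n(n+1)k+2(n+1)$, $s=\frac{((n+1)k+2)(n+1)}{2}$.
   Context: For graphs $H_1,H_2$, an $(H_1,H_2)$-$URD(v;r,s)$ is a decomposition of the edge set of the complete graph $K_v$ into edge-disjoint subgraphs (blocks), where the blocks are partitioned into $r+s$ classes, each class being a spanning collection of vertex-disjoint blocks (every vertex of $K_v$ lies in exactly one block of the class), such that $r$ classes consist only of copies of $H_1$ and $s$ classes consist only of copies of $H_2$. Here $K_2$ is a single edge and $K_{1,n}$ is the star with $n$ edges. *)

theory Defs
  imports "HOL-Number_Theory.Cong"
begin

text \<open>A block (subgraph) is represented by its edge set; since the graphs H considered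
  (K_2 and stars K_{1,n}) have no isolated vertices, the vertex set of a block is
  the union of its edges.\<close>

definition Kv_edges :: "nat \<Rightarrow> nat set set" where
  "Kv_edges v = {e. \<exists>x y. x < v \<and> y < v \<and> x \<noteq> y \<and> e = {x, y}}"

definition block_verts :: "nat set set \<Rightarrow> nat set" where
  "block_verts B = \<Union> B"

definition is_K2 :: "nat set set \<Rightarrow> bool" where
  "is_K2 B \<longleftrightarrow> (\<exists>x y. x \<noteq> y \<and> B = {{x, y}})"

definition is_star :: "nat \<Rightarrow> nat set set \<Rightarrow> bool" where
  "is_star n B \<longleftrightarrow> (\<exists>c L. finite L \<and> card L = n \<and> c \<notin> L \<and> B = (\<lambda>l. {c, l}) ` L)"

definition res_class :: "(nat set set \<Rightarrow> bool) \<Rightarrow> nat \<Rightarrow> nat set set set \<Rightarrow> bool" where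
  "res_class isH v C \<longleftrightarrow>
     (\<forall>B\<in>C. isH B \<and> B \<subseteq> Kv_edges v) \<and>
     (\<forall>x<v. \<exists>!B. B \<in> C \<and> x \<in> block_verts B)"

definition URD :: "(nat set set \<Rightarrow> bool) \<Rightarrow> (nat set set \<Rightarrow> bool) \<Rightarrow> nat \<Rightarrow> nat \<Rightarrow> nat \<Rightarrow> bool" where
  "URD isH1 isH2 v r s \<longleftrightarrow>
     (\<exists>C :: nat \<Rightarrow> nat set set set.
        (\<forall>i<r. res_class isH1 v (C i)) \<and>
        (\<forall>i. r \<le> i \<and> i < r + s \<longrightarrow> res_class isH2 v (C i)) \<and>
        (\<forall>e\<in>Kv_edges v. \<exists>!p. fst p < r + s \<and> snd p \<in> C (fst p) \<and> e \<in> snd p))"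

end

theory Submission
  imports Defs
begin

text \<open>Count the edges of \<open>K\<^sub>v\<close> class by class. The perfect matching contributes \<open>v/2\<close>
  edges and each of the \<open>s\<close> star classes consists of \<open>v/(n+1)\<close> stars with \<open>n\<close> edges, so
  \<open>v(v-1)/2 = v/2 + s n v/(n+1)\<close>, i.e. \<open>(n+1)(v-2) = 2sn\<close>. Since \<open>n\<close> and \<open>n+1\<close> are
  coprime, \<open>n\<close> divides \<open>v-2\<close>; together with \<open>n+1 | v\<close> this gives the congruence, and
  solving for \<open>s\<close> gives its value.\<close>

lemma finite_Kv_edges: "finite (Kv_edges v)"
proof (rule finite_subset)
  show "Kv_edges v \<subseteq> Pow {..<v}" unfolding Kv_edges_def by auto
qed simp

lemma card_Kv_edges: "2 * card (Kv_edges v) = v * (v - 1)"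
proof -
  have "Kv_edges v = {e. e \<subseteq> {..<v} \<and> card e = 2}"
    unfolding Kv_edges_def card_2_iff by auto
  then have "card (Kv_edges v) = v choose 2"
    by (simp add: n_subsets)
  moreover have "even (v * (v - 1))" by (cases "even v") (auto simp: even_mult_iff)
  ultimately show ?thesis by (metis choose_two dvd_mult_div_cancel)
qed

lemma card_block_verts_K2: "is_K2 B \<Longrightarrow> card (block_verts B) = 2"
  and card_K2: "is_K2 B \<Longrightarrow> card B = 1"
  unfolding is_K2_def block_verts_def by auto

lemma card_block_verts_star:
  assumes "n \<ge> 1" "is_star n B"
  shows "card (block_verts B) = n + 1"
proof -
  obtain c L where L: "finite L" "card L = n" "c \<notin> L" "B = (\<lambda>l. {c, l}) ` L"
    using assms(2) unfolding is_star_def by blast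
  have "L \<noteq> {}" using L assms(1) by auto
  then have "block_verts B = insert c L" unfolding block_verts_def L(4) by auto
  then show ?thesis using L by simp
qed

lemma card_star: "is_star n B \<Longrightarrow> card B = n"
  unfolding is_star_def by (auto simp: card_image inj_on_def doubleton_eq_iff)

lemma res_class_finite: "res_class isH v C \<Longrightarrow> finite C"
  unfolding res_class_def
  by (meson PowI finite_Kv_edges finite_Pow_iff finite_subset subsetI)

lemma res_class_block_verts_partition:
  assumes "res_class isH v C"
  shows "(\<Union>B\<in>C. block_verts B) = {..<v}"
    and "\<And>B B'. B \<in> C \<Longrightarrow> B' \<in> C \<Longrightarrow> B \<noteq> B' \<Longrightarrow> block_verts B \<inter> block_verts B' = {}"
proof -
  have sub: "block_verts B \<subseteq> {..<v}" if "B \<in> C" for B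
  proof -
    have "B \<subseteq> Kv_edges v" using assms that unfolding res_class_def by simp
    moreover have "\<Union>(Kv_edges v) \<subseteq> {..<v}" unfolding Kv_edges_def by auto
    ultimately show ?thesis unfolding block_verts_def by blast
  qed
  have unique: "\<exists>!B. B \<in> C \<and> x \<in> block_verts B" if "x < v" for x
    using assms that unfolding res_class_def by simp
  show "(\<Union>B\<in>C. block_verts B) = {..<v}"
  proof
    show "(\<Union>B\<in>C. block_verts B) \<subseteq> {..<v}" using sub by blast
    show "{..<v} \<subseteq> (\<Union>B\<in>C. block_verts B)"
    proof
      fix x assume "x \<in> {..<v}"
      then have "x < v" by simp
      then obtain B where "B \<in> C" "x \<in> block_verts B" using unique by blast
      then show "x \<in> (\<Union>B\<in>C. block_verts B)" by blast
    qed
  qed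
  show "block_verts B \<inter> block_verts B' = {}"
    if "B \<in> C" "B' \<in> C" "B \<noteq> B'" for B B'
  proof -
    have False if "x \<in> block_verts B" "x \<in> block_verts B'" for x
    proof -
      have "x < v" using sub \<open>B \<in> C\<close> that(1) by blast
      then show False using unique[of x] that \<open>B \<in> C\<close> \<open>B' \<in> C\<close> \<open>B \<noteq> B'\<close> by blast
    qed
    then show ?thesis by blast
  qed
qed

lemma res_class_card:
  assumes "res_class isH v C"
    and "\<And>B. isH B \<Longrightarrow> card (block_verts B) = a"
  shows "card C * a = v"
proof -
  have blocks: "\<And>B. B \<in> C \<Longrightarrow> isH B" using assms(1) unfolding res_class_def by blast
  have "v = card (\<Union>B\<in>C. block_verts B)"
    using res_class_block_verts_partition(1)[OF assms(1)] by simp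
  also have "\<dots> = (\<Sum>B\<in>C. card (block_verts B))"
  proof (rule card_UN_disjoint)
    show "finite C" using assms(1) by (rule res_class_finite)
    show "\<forall>B\<in>C. finite (block_verts B)"
      using res_class_block_verts_partition(1)[OF assms(1)]
      by (metis UN_upper finite_lessThan finite_subset)
    show "\<forall>B\<in>C. \<forall>B'\<in>C. B \<noteq> B' \<longrightarrow> block_verts B \<inter> block_verts B' = {}"
      using res_class_block_verts_partition(2)[OF assms(1)] by blast
  qed
  also have "\<dots> = card C * a" using assms(2) blocks by simp
  finally show ?thesis by simp
qed

lemma res_class_sum_card:
  assumes "res_class isH v C"
    and "\<And>B. isH B \<Longrightarrow> card (block_verts B) = a"
    and "\<And>B. isH B \<Longrightarrow> card B = b"
    and "a > 0"
  shows "(\<Sum>B\<in>C. card B) = b * (v div a)"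
proof -
  have "(\<Sum>B\<in>C. card B) = (\<Sum>B\<in>C. b)"
    using assms(1,3) unfolding res_class_def by (intro sum.cong) simp_all
  also have "\<dots> = b * card C" by simp
  also have "card C = v div a"
    using res_class_card[OF assms(1,2)] assms(4) by auto
  finally show ?thesis .
qed

lemma card_Kv_edges_decomposition:
  fixes N :: nat
  assumes fin: "\<And>i. i < N \<Longrightarrow> finite (C i)"
    and sub: "\<And>i B. i < N \<Longrightarrow> B \<in> C i \<Longrightarrow> B \<subseteq> Kv_edges v"
    and cover: "\<forall>e\<in>Kv_edges v. \<exists>!p. fst p < N \<and> snd p \<in> C (fst p) \<and> e \<in> snd p"
  shows "card (Kv_edges v) = (\<Sum>i<N. \<Sum>B\<in>C i. card B)"
proof -
  define P where "P = Sigma {..<N} C"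
  have edges: "Kv_edges v = (\<Union>p\<in>P. snd p)"
    using cover sub unfolding P_def by fastforce
  have "card (Kv_edges v) = (\<Sum>p\<in>P. card (snd p))"
    unfolding edges
  proof (rule card_UN_disjoint)
    show "finite P" unfolding P_def using fin by (intro finite_SigmaI) simp_all
    show "\<forall>p\<in>P. finite (snd p)"
      using edges finite_Kv_edges by (metis UN_upper finite_subset)
    show "\<forall>p\<in>P. \<forall>q\<in>P. p \<noteq> q \<longrightarrow> snd p \<inter> snd q = {}"
    proof (intro ballI impI)
      fix p q assume "p \<in> P" "q \<in> P" "p \<noteq> q"
      then have "fst p < N \<and> snd p \<in> C (fst p)" "fst q < N \<and> snd q \<in> C (fst q)"
        unfolding P_def by auto
      then show "snd p \<inter> snd q = {}"
        using cover edges \<open>p \<in> P\<close> \<open>p \<noteq> q\<close> by blast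
    qed
  qed
  also have "\<dots> = (\<Sum>i<N. \<Sum>B\<in>C i. card B)"
    unfolding P_def using fin by (subst sum.Sigma) (auto simp: split_def)
  finally show ?thesis .
qed

lemma URD_edge_count:
  assumes "URD isH1 isH2 v r s"
    and "\<And>B. isH1 B \<Longrightarrow> card (block_verts B) = a1" "\<And>B. isH1 B \<Longrightarrow> card B = b1"
    and "\<And>B. isH2 B \<Longrightarrow> card (block_verts B) = a2" "\<And>B. isH2 B \<Longrightarrow> card B = b2"
    and "a1 > 0" "a2 > 0"
  shows "card (Kv_edges v) = r * (b1 * (v div a1)) + s * (b2 * (v div a2))"
proof -
  obtain C where first: "\<And>i. i < r \<Longrightarrow> res_class isH1 v (C i)"
    and second: "\<And>i. r \<le> i \<Longrightarrow> i < r + s \<Longrightarrow> res_class isH2 v (C i)"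
    and cover: "\<forall>e\<in>Kv_edges v. \<exists>!p. fst p < r + s \<and> snd p \<in> C (fst p) \<and> e \<in> snd p"
    using assms(1) unfolding URD_def by blast
  have classes: "res_class isH1 v (C i) \<or> res_class isH2 v (C i)" if "i < r + s" for i
    using first second that not_le by blast
  have "card (Kv_edges v) = (\<Sum>i<r + s. \<Sum>B\<in>C i. card B)"
  proof (rule card_Kv_edges_decomposition)
    show "finite (C i)" if "i < r + s" for i
      using classes[OF that] res_class_finite by blast
    show "B \<subseteq> Kv_edges v" if "i < r + s" "B \<in> C i" for i B
      using classes[OF that(1)] that(2) unfolding res_class_def by blast
  qed (fact cover)
  also have "\<dots> = (\<Sum>i<r. \<Sum>B\<in>C i. card B) + (\<Sum>i\<in>{r..<r + s}. \<Sum>B\<in>C i. card B)"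
    by (simp add: lessThan_atLeast0 sum.atLeastLessThan_concat)
  also have "(\<Sum>i<r. \<Sum>B\<in>C i. card B) = r * (b1 * (v div a1))"
    using res_class_sum_card[OF first assms(2,3,6)] by simp
  also have "(\<Sum>i\<in>{r..<r + s}. \<Sum>B\<in>C i. card B) = s * (b2 * (v div a2))"
    using res_class_sum_card[OF second assms(4,5,7)] by simp
  finally show ?thesis .
qed

lemma URD_res_class_first: "URD isH1 isH2 v r s \<Longrightarrow> r > 0 \<Longrightarrow> \<exists>C. res_class isH1 v C"
  unfolding URD_def by blast

lemma URD_res_class_second: "URD isH1 isH2 v r s \<Longrightarrow> s > 0 \<Longrightarrow> \<exists>C. res_class isH2 v C"
  unfolding URD_def by (meson add_strict_left_mono add.right_neutral le_add1)

lemma matching_star_edge_equation: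
  fixes n v s :: nat
  assumes "v > 0" "2 dvd v" "n + 1 dvd v"
    and "v * (v - 1) = 2 * (v div 2 + s * (n * (v div (n + 1))))"
  shows "(n + 1) * (v - 2) = 2 * s * n"
proof -
  obtain m where v_m: "m * (n + 1) = v" using assms(3) by (metis dvd_def mult.commute)
  then have "m > 0" using assms(1) by (cases m) auto
  have "v div (n + 1) = m" using v_m nonzero_mult_div_cancel_right[of "n + 1" m] by simp
  then have "v * (v - 1) = v + 2 * s * n * m" using assms(2,4) by simp
  then have "v * (v - 2) = 2 * s * n * m" by (simp add: diff_mult_distrib2)
  have "m * ((n + 1) * (v - 2)) = v * (v - 2)"
    by (simp only: mult.assoc[symmetric] v_m)
  also have "\<dots> = m * (2 * s * n)"
    using \<open>v * (v - 2) = 2 * s * n * m\<close> by (simp add: ac_simps)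
  finally show ?thesis using \<open>m > 0\<close> by simp
qed

lemma edge_equation_imp_cong_int:
  fixes n v s :: int
  assumes "n + 1 dvd v" and "(n + 1) * (v - 2) = 2 * s * n"
  shows "[v = 2 * (n + 1)] (mod n * (n + 1))"
proof -
  have coprime: "coprime n (n + 1)" by simp
  have "n dvd (n + 1) * (v - 2)" using assms(2) by simp
  then have "n dvd v - 2" using coprime coprime_dvd_mult_right_iff by blast
  then have "n dvd (v - 2) - 2 * n" by simp
  moreover have "n + 1 dvd v - 2 * (n + 1)" by (rule dvd_diff[OF assms(1) dvd_triv_right])
  ultimately have "n * (n + 1) dvd v - 2 * (n + 1)"
    using coprime by (intro divides_mult) (simp_all add: algebra_simps)
  then show ?thesis by (simp add: cong_iff_dvd_diff)
qed

lemma edge_equation_imp_cong: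
  fixes n v s :: nat
  assumes "n + 1 dvd v" and "v \<ge> 2" and "(n + 1) * (v - 2) = 2 * s * n"
  shows "[v = 2 * (n + 1)] (mod n * (n + 1))"
proof -
  have "int n + 1 dvd int v" using assms(1) by (metis of_nat_dvd_iff of_nat_Suc Suc_eq_plus1 add.commute)
  moreover have "int (v - 2) = int v - 2" using assms(2) by simp
  then have "(int n + 1) * (int v - 2) = 2 * int s * int n"
    using arg_cong[OF assms(3), of int] by (simp only: of_nat_mult of_nat_add of_nat_1 of_nat_numeral)
  ultimately have "[int v = 2 * (int n + 1)] (mod int n * (int n + 1))"
    by (rule edge_equation_imp_cong_int)
  then show ?thesis by (simp add: cong_int_iff[symmetric] algebra_simps)
qed

theorem lemma1:
  fixes n v s :: nat
  assumes "n > 1" and "odd n"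
    and "v \<ge> 1" and "s \<ge> 1"
    and "URD is_K2 (is_star n) v 1 s"
  shows "[v = 2 * (n + 1)] (mod n * (n + 1)) \<and>
         (\<forall>k::nat. v = n * (n + 1) * k + 2 * (n + 1) \<longrightarrow>
            2 * s = ((n + 1) * k + 2) * (n + 1))"
proof -
  have "n \<ge> 1" using assms(1) by simp
  obtain M where "res_class is_K2 v M" using URD_res_class_first[OF assms(5)] by auto
  then have "card M * 2 = v" using card_block_verts_K2 by (rule res_class_card)
  then have "2 dvd v" and "v \<ge> 2" using assms(3) by auto
  obtain S where "res_class (is_star n) v S" using URD_res_class_second[OF assms(5)] assms(4) by auto
  then have "card S * (n + 1) = v" using card_block_verts_star[OF \<open>n \<ge> 1\<close>] by (rule res_class_card)
  then have "n + 1 dvd v" by (metis dvd_triv_right)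
  have "card (Kv_edges v) = v div 2 + s * (n * (v div (n + 1)))"
    using URD_edge_count[OF assms(5) card_block_verts_K2 card_K2
        card_block_verts_star[OF \<open>n \<ge> 1\<close>] card_star] by simp
  then have key: "(n + 1) * (v - 2) = 2 * s * n"
    using card_Kv_edges[of v] \<open>2 dvd v\<close> \<open>n + 1 dvd v\<close> assms(3)
    by (intro matching_star_edge_equation) auto
  have "2 * s = ((n + 1) * k + 2) * (n + 1)" if "v = n * (n + 1) * k + 2 * (n + 1)" for k
  proof -
    have "n * (2 * s) = n * (((n + 1) * k + 2) * (n + 1))"
      using key that by (simp add: algebra_simps)
    then show ?thesis using assms(1) by (metis mult_cancel_left not_one_less_zero)
  qed
  then show ?thesis
    using edge_equation_imp_cong[OF \<open>n + 1 dvd v\<close> \<open>v \<ge> 2\<close> key] by blast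
qed

end
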